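(* Let $j\in\{1,\dots,l\}$. Let $(R_h)\subset SO(3)$ with $R_h\in\mathcal R^j_h$ for every $h$, and let $(W_h)\subset\mathbb R^{3\times3}_{\mathrm{skw}}$ with $|W_h|=1$ and $R_hW_h\in N\mathcal R^j_h{}_{R_h}$ for every $h$. Then, up to a subsequence, $R_hW_h\to RW$ where $R\in\mathcal R^j$, $W\in\mathbb R^{3\times3}_{\mathrm{skw}}$, $|W|=1$ and $RW\in N\mathcal R^j_R$.
   Context: Let $U_1,\dots,U_l\in\mathbb R^{3\times3}$ be symmetric positive definite, $K_i=SO(3)U_i$, $K=\bigcup_iK_i$. $S\subset\mathbb R^2$ open bounded connected Lipschitz. Let $\alpha\ge2$, $\gamma=\alpha/2$, $q\in(1,2]$, $q'$ its conjugate; $f_h\in L^{q'}(S;\mathbb R^3)$ with $\int_Sf_h=0$ and $h^{-\gamma-1}f_h\to f$ in $L^{q'}(S;\mathbb R^3)$ as $h\to0$ along a sequence. For $A\in\mathbb R^{3\times3}$: $F_h(A)=\int_Sf_h\cdot A(x_1,x_2,0)^Tdx'$, $F(A)=\int_Sf\cdot A(x_1,x_2,0)^Tdx'$. $\mathcal M_h=\operatorname{argmax}_KF_h$, $\mathcal M=\operatorname{argmax}_KF$; $\mathcal R^j=\operatorname{argmax}_{R\in SO(3)}F(RU_j)$, $\mathcal R^j_h=\operatorname{argmax}_{R\in SO(3)}F_h(RU_j)$; $\Lambda_h,\Lambda\subset\{1,\dots,l\}$ with $\mathcal M_h=\bigcup_{j\in\Lambda_h}\mathcal R^j_hU_j$,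 $\mathcal M=\bigcup_{j\in\Lambda}\mathcal R^jU_j$. For $R\in\mathcal R^j$: $T\mathcal R^j_R=\{RW:W\in\mathbb R^{3\times3}_{\mathrm{skw}},F(RW^2U_j)=0\}$, $N\mathcal R^j_R=\{RW:W\in\mathbb R^{3\times3}_{\mathrm{skw}},RW\perp T\mathcal R^j_R\}$ (Frobenius product); $T\mathcal R^j_h{}_R$, $N\mathcal R^j_h{}_R$ are defined analogously with $F_h$ for $R\in\mathcal R^j_h$. $\mathcal R^j,\mathcal R^j_h$ are closed submanifolds of $SO(3)$ with these tangent spaces. Standing assumptions: (F1) $\Lambda_h=\Lambda$ for $h$ small; (F2) $\dim\mathcal R^j_h\to\dim\mathcal R^j$ for every $j\in\Lambda$. *)

theory Defs
  imports "HOL-Analysis.Analysis"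
begin

type_synonym mat3 = "real^3^3"

definition SO3 :: "mat3 set" where
  "SO3 = {R. rotation_matrix R}"

definition skew :: "mat3 \<Rightarrow> bool" where
  "skew W \<longleftrightarrow> transpose W = - W"

definition sym_pos_def :: "mat3 \<Rightarrow> bool" where
  "sym_pos_def U \<longleftrightarrow> transpose U = U \<and> (\<forall>x::real^3. x \<noteq> 0 \<longrightarrow> x \<bullet> (U *v x) > 0)"

definition lipschitz_domain :: "(real^2) set \<Rightarrow> bool" where
  "lipschitz_domain S \<longleftrightarrow> open S \<and>
     (\<forall>p\<in>frontier S. \<exists>r>0. \<exists>Q::real^2^2. \<exists>g::real\<Rightarrow>real. \<exists>L.
        rotation_matrix Q \<and> L-lipschitz_on UNIV g \<and>
        (\<forall>x\<in>ball p r. x \<in> S \<longleftrightarrow> (Q *v (x - p))$2 < g ((Q *v (x - p))$1)))"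

definition load :: "(real^2) set \<Rightarrow> (real^2 \<Rightarrow> real^3) \<Rightarrow> mat3 \<Rightarrow> real" where
  "load S g A = integral\<^sup>L (lebesgue_on S) (\<lambda>x. g x \<bullet> (A *v vector [x$1, x$2, 0]))"

definition argmax_on :: "(mat3 \<Rightarrow> real) \<Rightarrow> mat3 set \<Rightarrow> mat3 set" where
  "argmax_on F X = {A \<in> X. \<forall>B\<in>X. F B \<le> F A}"

definition wellset :: "nat \<Rightarrow> (nat \<Rightarrow> mat3) \<Rightarrow> mat3 set" where
  "wellset l U = (\<Union>i\<in>{1..l}. (\<lambda>R. R ** U i) ` SO3)"

definition Rset :: "(mat3 \<Rightarrow> real) \<Rightarrow> mat3 \<Rightarrow> mat3 set" where
  "Rset F Uj = {R \<in> SO3. \<forall>R'\<in>SO3. F (R' ** Uj) \<le> F (R ** Uj)}"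

text \<open>Lambda: indices j with M = union over j in Lambda of R^j U_j\<close>
definition Lam :: "(mat3 \<Rightarrow> real) \<Rightarrow> nat \<Rightarrow> (nat \<Rightarrow> mat3) \<Rightarrow> nat set" where
  "Lam F l U = {j \<in> {1..l}. (\<lambda>R. R ** U j) ` Rset F (U j) \<subseteq> argmax_on F (wellset l U)}"

definition Tsp :: "(mat3 \<Rightarrow> real) \<Rightarrow> mat3 \<Rightarrow> mat3 \<Rightarrow> mat3 set" where
  "Tsp F Uj R = {R ** W | W. skew W \<and> F (R ** W ** W ** Uj) = 0}"

definition Nsp :: "(mat3 \<Rightarrow> real) \<Rightarrow> mat3 \<Rightarrow> mat3 \<Rightarrow> mat3 set" where
  "Nsp F Uj R = {R ** W | W. skew W \<and> (\<forall>V\<in>Tsp F Uj R. (R ** W) \<bullet> V = 0)}"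

end

theory Submission
  imports Defs
begin

(* Write the load as F(A) = A \<bullet> X with the moment matrix X of the force, whose third
   column vanishes. At a maximizer R of R \<mapsto> F(R U), turning R about an axis w shows
   that G = R^T X U^T is symmetric and that the second variation w \<mapsto> (hat w)^2 \<bullet> G
   is nonpositive. As G also kills U^-T e3, the zero set of the second variation is all of
   R^3, a line or {0} according as X = 0, rank X = 1 or rank X = 2; so the dimension of
   the tangent space at R depends on X only. The rescaled moment matrices of f_h converge
   to that of f, and (F2) makes their rank type eventually equal to that of the limit.
   In a convergent subsequence of (R_h, W_h) the limit R is again a maximizer, and W stays
   orthogonal to the tangent directions at R: the case X = 0 cannot occur (W_h would be
   orthogonal to itself), the rank-two case is vacuous, and in the rank-one case unit
   tangent directions at R_h converge to a unit tangent direction at R. *)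

section \<open>Skew matrices and rotations\<close>

text \<open>\<open>hat w\<close> is the matrix of \<open>x \<mapsto> w \<times> x\<close>.\<close>
definition hat :: "real^3 \<Rightarrow> mat3" where
  "hat w = vector [vector [0, -(w$3), w$2], vector [w$3, 0, -(w$1)], vector [-(w$2), w$1, 0]]"

text \<open>For \<open>G = R\<^sup>T X U\<^sup>T\<close> this is \<open>(hat w)\<^sup>2 \<bullet> G\<close> (see \<open>inner_hat_sq\<close>), the second derivative
  at \<open>s = 0\<close> of \<open>s \<mapsto> (R exp(s hat w) U) \<bullet> X\<close>.\<close>
definition second_variation :: "mat3 \<Rightarrow> real^3 \<Rightarrow> real" where
  "second_variation G w = w \<bullet> (G *v w) - (w \<bullet> w) * trace G"

lemma inner_hat_sq: "(hat w ** hat w) \<bullet> G = second_variation G w"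
  by (simp add: inner_vec_def sum_3 matrix_matrix_mult_def matrix_vector_mult_def hat_def
      second_variation_def trace_def algebra_simps power2_eq_square)

lemma hat_nth: "hat w $ 3 $ 2 = w$1" "hat w $ 1 $ 3 = w$2" "hat w $ 2 $ 1 = w$3"
  by (simp_all add: hat_def)

lemma hat_0 [simp]: "hat 0 = 0"
  by (simp add: hat_def vec_eq_iff forall_3)

lemma hat_scaleR: "hat (c *\<^sub>R w) = c *\<^sub>R hat w"
  by (simp add: hat_def vec_eq_iff forall_3)

lemma linear_hat: "linear hat"
  by (rule linearI) (simp_all add: hat_def vec_eq_iff forall_3)

lemma inj_hat: "inj hat"
proof (rule injI)
  fix x y assume "hat x = hat y"
  then have "hat x $ 3 $ 2 = hat y $ 3 $ 2" "hat x $ 1 $ 3 = hat y $ 1 $ 3" "hat x $ 2 $ 1 = hat y $ 2 $ 1"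
    by simp_all
  then show "x = y" by (simp add: hat_nth vec_eq_iff forall_3)
qed

lemma skew_nth: "skew W \<Longrightarrow> W $ i $ k = - W $ k $ i"
proof -
  assume "skew W"
  then have "transpose W $ k $ i = (- W) $ k $ i" unfolding skew_def by simp
  then show ?thesis by (simp add: transpose_def)
qed

lemma skew_hat: "skew (hat w)"
  by (simp add: skew_def hat_def transpose_def vec_eq_iff forall_3)

lemma skew_eq_hat: "skew W \<Longrightarrow> W = hat (vector [W$3$2, W$1$3, W$2$1])"
  using skew_nth[of W 1 1] skew_nth[of W 2 2] skew_nth[of W 3 3]
    skew_nth[of W 1 2] skew_nth[of W 1 3] skew_nth[of W 2 3]
  by (simp add: hat_def vec_eq_iff forall_3)

lemma range_hat: "range hat = {W. skew W}"
  using skew_hat skew_eq_hat by blast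

lemma dim_skew: "dim {W::mat3. skew W} = 3"
  using dim_image_eq[OF linear_hat, of UNIV] inj_hat by (simp add: range_hat[symmetric])

lemma inner_matrix: "(A::real^'n^'m) \<bullet> B = (\<Sum>i\<in>UNIV. \<Sum>k\<in>UNIV. A$i$k * B$i$k)"
  by (simp add: inner_vec_def)

lemma inner_matrix_mult_left: "((A::real^'n^'m) ** B) \<bullet> C = B \<bullet> (transpose A ** C)"
proof -
  have swap: "(\<Sum>i\<in>UNIV. \<Sum>k\<in>UNIV. \<Sum>j\<in>UNIV. f i j k) = (\<Sum>j\<in>UNIV. \<Sum>k\<in>UNIV. \<Sum>i\<in>UNIV. f i j k)"
    for f :: "'m \<Rightarrow> 'n \<Rightarrow> 'k \<Rightarrow> real"
  proof -
    have "(\<Sum>i\<in>UNIV. \<Sum>k\<in>UNIV. \<Sum>j\<in>UNIV. f i j k) = (\<Sum>i\<in>UNIV. \<Sum>j\<in>UNIV. \<Sum>k\<in>UNIV. f i j k)"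
      by (rule sum.cong[OF refl], rule sum.swap)
    also have "\<dots> = (\<Sum>j\<in>UNIV. \<Sum>i\<in>UNIV. \<Sum>k\<in>UNIV. f i j k)" by (rule sum.swap)
    also have "\<dots> = (\<Sum>j\<in>UNIV. \<Sum>k\<in>UNIV. \<Sum>i\<in>UNIV. f i j k)"
      by (rule sum.cong[OF refl], rule sum.swap)
    finally show ?thesis .
  qed
  show ?thesis
    unfolding inner_matrix matrix_matrix_mult_def transpose_def
    by (simp add: sum_distrib_left sum_distrib_right mult_ac) (rule swap)
qed

lemma inner_matrix_mult_right: "((B::real^'n^'m) ** U) \<bullet> C = B \<bullet> (C ** transpose U)"
  unfolding inner_matrix matrix_matrix_mult_def transpose_def
  by (simp add: sum_distrib_left sum_distrib_right mult_ac) (rule sum.cong[OF refl], rule sum.swap)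

lemma inner_matrix_conj: "((R::real^'n^'m) ** E ** U) \<bullet> X = E \<bullet> (transpose R ** X ** transpose U)"
  by (rule trans[OF inner_matrix_mult_right], rule trans[OF inner_matrix_mult_left])
    (simp add: matrix_mul_assoc)

lemma SO3_orthogonal: "R \<in> SO3 \<Longrightarrow> transpose R ** R = mat 1 \<and> R ** transpose R = mat 1"
  by (simp add: SO3_def rotation_matrix_def orthogonal_matrix_def)

lemma mat_1_in_SO3: "mat 1 \<in> SO3"
  by (simp add: SO3_def rotation_matrix_def orthogonal_matrix_id)

lemma SO3_mult: "R \<in> SO3 \<Longrightarrow> E \<in> SO3 \<Longrightarrow> R ** E \<in> SO3"
  by (simp add: SO3_def rotation_matrix_def orthogonal_matrix_mul det_mul)

lemma inner_SO3_mult: "R \<in> SO3 \<Longrightarrow> (R ** A) \<bullet> (R ** B) = A \<bullet> (B::mat3)"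
  using SO3_orthogonal[of R] by (simp add: inner_matrix_mult_left matrix_mul_assoc)

lemma inj_SO3_mult: "R \<in> SO3 \<Longrightarrow> inj (\<lambda>W::mat3. R ** W)"
  by (rule injI) (metis SO3_orthogonal matrix_mul_assoc matrix_mul_lid)

lemma dim_SO3_image: "R \<in> SO3 \<Longrightarrow> dim ((\<lambda>W::mat3. R ** W) ` S) = dim S"
proof -
  have "linear (\<lambda>W::mat3. R ** W)"
    by (rule linearI) (simp_all add: matrix_add_ldistrib matrix_scalar_ac scalar_matrix_assoc)
  moreover assume "R \<in> SO3"
  ultimately show ?thesis using dim_image_eq inj_SO3_mult by (metis inj_on_subset top_greatest)
qed

text \<open>For a unit axis \<open>k\<close>, the rotation by the angle \<open>\<theta>\<close> about \<open>k\<close> is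
  \<open>rodrigues (sin \<theta>) (1 - cos \<theta>) k\<close>; the pairs \<open>(a, b)\<close> of this form are those with
  \<open>a\<^sup>2 + b\<^sup>2 = 2 b\<close>.\<close>
definition rodrigues :: "real \<Rightarrow> real \<Rightarrow> real^3 \<Rightarrow> mat3" where
  "rodrigues a b k = mat 1 + a *\<^sub>R hat k + b *\<^sub>R (hat k ** hat k)"

lemma rodrigues_in_SO3:
  assumes k: "k$1^2 + k$2^2 + k$3^2 = 1" and ab: "a^2 + b^2 = 2*b"
  shows "rodrigues a b k \<in> SO3"
proof -
  have "transpose (rodrigues a b k) ** rodrigues a b k = mat 1"
    unfolding rodrigues_def vec_eq_iff forall_3
    by (simp add: matrix_matrix_mult_def sum_3 hat_def transpose_def mat_def)
      (use k ab in algebra)+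
  moreover have "det (rodrigues a b k) = 1"
    unfolding rodrigues_def det_3
    by (simp add: matrix_matrix_mult_def sum_3 hat_def mat_def) (use k ab in algebra)
  ultimately show ?thesis
    by (simp add: SO3_def rotation_matrix_def orthogonal_matrix)
qed

section \<open>Optimality conditions at a maximizer\<close>

lemma nonpos_quadratic_coeffs:
  fixes \<alpha> \<beta> :: real
  assumes "\<And>s. s * \<alpha> + s^2 * \<beta> \<le> 0"
  shows "\<alpha> = 0" "\<beta> \<le> 0"
proof -
  show b: "\<beta> \<le> 0" using assms[of 1] assms[of "-1"] by simp
  define s where "s = \<alpha> / (1 - \<beta>)"
  have sd: "s * (1 - \<beta>) = \<alpha>" using b by (simp add: s_def)
  have "(1 - \<beta>)^2 * (s * \<alpha> + s^2 * \<beta>) = (1 - \<beta>) * (s * (1 - \<beta>)) * \<alpha> + (s * (1 - \<beta>))^2 * \<beta>"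
    by (simp add: power2_eq_square algebra_simps)
  also have "\<dots> = \<alpha>^2" unfolding sd by (simp add: power2_eq_square algebra_simps)
  finally have "\<alpha>^2 = (1 - \<beta>)^2 * (s * \<alpha> + s^2 * \<beta>)" ..
  also have "\<dots> \<le> 0" using assms by (simp add: mult_nonneg_nonpos)
  finally show "\<alpha> = 0" by simp
qed

lemma SO3_maximizer_unit_variations:
  assumes R: "R \<in> Rset (\<lambda>A. A \<bullet> X) U" and k: "k$1^2 + k$2^2 + k$3^2 = 1"
  defines "G \<equiv> transpose R ** X ** transpose U"
  shows "hat k \<bullet> G = 0 \<and> (hat k ** hat k) \<bullet> G \<le> 0"
proof -
  have "s * (hat k \<bullet> G) + s^2 * ((hat k ** hat k) \<bullet> G) \<le> 0" for s
  proof -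
    \<comment> \<open>with \<open>s = tan (\<theta>/2)\<close> this is \<open>a = sin \<theta>\<close>, \<open>b = 1 - cos \<theta>\<close>\<close>
    define c where "c = 1 + s^2"
    have c: "c > 0" unfolding c_def by (simp add: add_pos_nonneg)
    define a b where "a = 2 * s / c" and "b = 2 * s^2 / c"
    have ac: "a * c = 2 * s" and bc: "b * c = 2 * s^2" using c by (simp_all add: a_def b_def)
    have "(c * c) * (a^2 + b^2) = (a * c)^2 + (b * c)^2" by (simp add: power2_eq_square algebra_simps)
    also have "\<dots> = 4 * s^2 * c" unfolding ac bc by (simp add: c_def power2_eq_square algebra_simps)
    also have "\<dots> = (c * c) * (2 * b)" using bc by (simp add: algebra_simps)
    finally have "a^2 + b^2 = 2*b" using c by simp
    then have "R ** rodrigues a b k \<in> SO3"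
      using R rodrigues_in_SO3[OF k] SO3_mult by (simp add: Rset_def)
    then have "(R ** rodrigues a b k ** U) \<bullet> X \<le> (R ** mat 1 ** U) \<bullet> X"
      using R by (simp add: Rset_def)
    then have "rodrigues a b k \<bullet> G \<le> mat 1 \<bullet> G"
      unfolding inner_matrix_conj G_def .
    then have "a * (hat k \<bullet> G) + b * ((hat k ** hat k) \<bullet> G) \<le> 0"
      unfolding rodrigues_def by (simp add: inner_add_left)
    then have "(c/2) * (a * (hat k \<bullet> G) + b * ((hat k ** hat k) \<bullet> G)) \<le> 0"
      using c by (simp add: mult_nonneg_nonpos)
    moreover have "(c/2) * (a * (hat k \<bullet> G) + b * ((hat k ** hat k) \<bullet> G)) =
        s * (hat k \<bullet> G) + s^2 * ((hat k ** hat k) \<bullet> G)"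
      using c unfolding a_def b_def by (simp add: field_simps)
    ultimately show ?thesis by simp
  qed
  then show ?thesis using nonpos_quadratic_coeffs by blast
qed

lemma SO3_maximizer_variations:
  assumes R: "R \<in> Rset (\<lambda>A. A \<bullet> X) U"
  defines "G \<equiv> transpose R ** X ** transpose U"
  shows "hat k \<bullet> G = 0" and "second_variation G k \<le> 0"
proof -
  have "hat k \<bullet> G = 0 \<and> (hat k ** hat k) \<bullet> G \<le> 0"
  proof (cases "k = 0")
    case False
    define u where "u = (1 / norm k) *\<^sub>R k"
    have "norm u = 1" using False by (simp add: u_def)
    then have "u \<bullet> u = 1" by (simp add: norm_eq_1)
    then have u1: "u$1^2 + u$2^2 + u$3^2 = 1" by (simp add: inner_vec_def sum_3 power2_eq_square)
    have "hat k = norm k *\<^sub>R hat u" using False by (simp add: u_def hat_scaleR[symmetric])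
    then have "hat k \<bullet> G = norm k * (hat u \<bullet> G)"
      and "(hat k ** hat k) \<bullet> G = (norm k * norm k) * ((hat u ** hat u) \<bullet> G)"
      by (simp_all add: matrix_scalar_ac scalar_matrix_assoc[symmetric])
    then show ?thesis
      using SO3_maximizer_unit_variations[OF R u1] unfolding G_def by (simp add: mult_nonneg_nonpos)
  qed simp
  then show "hat k \<bullet> G = 0" and "second_variation G k \<le> 0" by (simp_all add: inner_hat_sq)
qed

lemma symmetric_if_orthogonal_hats:
  assumes "\<And>k. hat k \<bullet> G = 0"
  shows "transpose G = G"
  using assms[of "axis 1 1"] assms[of "axis 2 1"] assms[of "axis 3 1"]
  by (simp add: hat_def axis_def inner_vec_def sum_3 transpose_def vec_eq_iff forall_3)

lemma inner_matrix_vector_mult: "((A::real^'n^'m) *v x) \<bullet> y = x \<bullet> (transpose A *v y)"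
  by (metis dot_lmul_matrix vector_transpose_matrix)

lemma second_variation_orthogonal_conj:
  assumes "orthogonal_matrix P"
  shows "second_variation (transpose P ** G ** P) w = second_variation G (P *v w)"
proof -
  have "w \<bullet> ((transpose P ** G ** P) *v w) = (P *v w) \<bullet> (G *v (P *v w))"
    by (simp add: inner_matrix_vector_mult matrix_vector_mul_assoc matrix_mul_assoc)
  moreover have "trace (transpose P ** G ** P) = trace G"
    using assms by (metis matrix_mul_assoc matrix_mul_rid orthogonal_matrix_def trace_mul_sym)
  moreover have "w \<bullet> w = (P *v w) \<bullet> (P *v w)"
    using assms by (simp add: inner_matrix_vector_mult matrix_vector_mul_assoc orthogonal_matrix)
  ultimately show ?thesis by (simp add: second_variation_def)
qed

section \<open>The zero set of the second variation\<close>

definition rank_le_one :: "real^'n^'m \<Rightarrow> bool" where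
  "rank_le_one X \<longleftrightarrow> (\<exists>y. \<forall>w. \<exists>t. X *v w = t *\<^sub>R y)"

lemma rank_le_one_mult: "rank_le_one X \<Longrightarrow> rank_le_one (A ** X ** B)"
proof -
  assume "rank_le_one X"
  then obtain y where y: "\<forall>w. \<exists>t. X *v w = t *\<^sub>R y" unfolding rank_le_one_def by blast
  have "\<exists>t. (A ** X ** B) *v w = t *\<^sub>R (A *v y)" for w
  proof -
    obtain t where "X *v (B *v w) = t *\<^sub>R y" using y by blast
    then have "(A ** X ** B) *v w = t *\<^sub>R (A *v y)"
      by (simp add: matrix_vector_mul_assoc[symmetric] matrix_vector_mult_scaleR)
    then show ?thesis by blast
  qed
  then show ?thesis unfolding rank_le_one_def by blast
qed

lemma invertible_cancel:
  fixes A :: "real^'m^'m" and B :: "real^'n^'n"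
  assumes "invertible A" "invertible B"
  obtains A' B' where "A' ** (A ** X ** B) ** B' = X"
proof -
  obtain A' B' where "A' ** A = mat 1" "B ** B' = mat 1"
    using assms unfolding invertible_def by blast
  moreover have "A' ** (A ** X ** B) ** B' = (A' ** A) ** X ** (B ** B')"
    by (simp add: matrix_mul_assoc)
  ultimately show thesis using that by simp
qed

lemma rank_le_one_mult_invertible:
  fixes A :: "real^'m^'m" and B :: "real^'n^'n"
  assumes "invertible A" "invertible B"
  shows "rank_le_one (A ** X ** B) \<longleftrightarrow> rank_le_one X"
proof
  obtain A' B' where "A' ** (A ** X ** B) ** B' = X" by (rule invertible_cancel[OF assms])
  moreover assume "rank_le_one (A ** X ** B)"
  ultimately show "rank_le_one X" using rank_le_one_mult by metis
qed (rule rank_le_one_mult)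

lemma mult_invertible_eq_0:
  fixes A :: "real^'m^'m" and B :: "real^'n^'n"
  assumes "invertible A" "invertible B"
  shows "A ** X ** B = 0 \<longleftrightarrow> X = 0"
proof -
  obtain A' B' where cancel: "A' ** (A ** X ** B) ** B' = X" by (rule invertible_cancel[OF assms])
  have zero: "C ** 0 = 0" "0 ** D = 0" for C :: "real^'k^'l" and D :: "real^'k^'l"
    by (simp_all add: matrix_matrix_mult_def vec_eq_iff)
  show ?thesis
  proof
    assume "A ** X ** B = 0"
    then show "X = 0" using cancel zero by simp
  qed (simp add: zero)
qed

lemma rank_le_one_scaleR: "c \<noteq> 0 \<Longrightarrow> rank_le_one (c *\<^sub>R X) \<longleftrightarrow> rank_le_one X"
proof -
  assume c: "c \<noteq> 0"
  have "c *\<^sub>R X = (c *\<^sub>R mat 1) ** X ** mat 1" by (simp add: scalar_matrix_assoc[symmetric])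
  moreover have "invertible (c *\<^sub>R mat 1 :: real^'m^'m)"
    using c by (intro scalar_invertible) (auto simp: invertible_def)
  moreover have "invertible (mat 1 :: real^'n^'n)" by (auto simp: invertible_def)
  ultimately show ?thesis using rank_le_one_mult_invertible[of "c *\<^sub>R mat 1" "mat 1" X] by simp
qed

definition bordered :: "mat3 \<Rightarrow> bool" where
  "bordered G \<longleftrightarrow> transpose G = G \<and> G *v axis 1 1 = 0"

lemma bordered_nth:
  assumes "bordered G"
  shows "G$1$1 = 0" "G$1$2 = 0" "G$1$3 = 0" "G$2$1 = 0" "G$3$1 = 0" "G$3$2 = G$2$3"
proof -
  have "(G *v axis 1 1) $ i = G $ i $ 1" for i
    by (simp add: matrix_vector_mult_def axis_def sum_3 exhaust_3)
  then have col: "G $ i $ 1 = 0" for i using assms by (simp add: bordered_def)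
  have "transpose G $ i $ k = G $ i $ k" for i k using assms by (simp add: bordered_def)
  then have sym: "G $ k $ i = G $ i $ k" for i k by (simp add: transpose_def)
  show "G$1$1 = 0" "G$1$2 = 0" "G$1$3 = 0" "G$2$1 = 0" "G$3$1 = 0" "G$3$2 = G$2$3"
    using col[of 1] col[of 2] col[of 3] sym[of 1 2] sym[of 1 3] sym[of 2 3] by simp_all
qed

definition block_form :: "real \<Rightarrow> real \<Rightarrow> real \<Rightarrow> real^3 \<Rightarrow> real" where
  "block_form a b c w = -(a+c)*(w$1)^2 - c*(w$2)^2 + 2*b*(w$2)*(w$3) - a*(w$3)^2"

lemma second_variation_bordered:
  "bordered G \<Longrightarrow> second_variation G w = block_form (G$2$2) (G$2$3) (G$3$3) w"
  using bordered_nth[of G]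
  by (simp add: second_variation_def block_form_def inner_vec_def matrix_vector_mult_def sum_3
      trace_def power2_eq_square algebra_simps)

lemma block_form_nonpos_coeffs:
  assumes "\<And>w. block_form a b c w \<le> 0"
  shows "a \<ge> 0" "c \<ge> 0" "a*c \<ge> b^2"
proof -
  have "block_form a b c (vector [0,0,1]) \<le> 0" by (rule assms)
  then show a: "a \<ge> 0" by (simp add: block_form_def)
  have "block_form a b c (vector [0,1,0]) \<le> 0" by (rule assms)
  then show c: "c \<ge> 0" by (simp add: block_form_def)
  have 1: "block_form a b c (vector [0,b,c]) \<le> 0"
    and 2: "block_form a b c (vector [0,a,b]) \<le> 0"
    and 3: "block_form a b c (vector [0,1,1]) \<le> 0"
    and 4: "block_form a b c (vector [0,1,-1]) \<le> 0"
    by (rule assms)+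
  have e1: "block_form a b c (vector [0,b,c]) = c * (b^2 - a*c)"
    and e2: "block_form a b c (vector [0,a,b]) = a * (b^2 - a*c)"
    by (simp_all add: block_form_def power2_eq_square algebra_simps)
  show "a*c \<ge> b^2"
  proof (cases "c > 0")
    case True
    then show ?thesis using 1 e1 by (simp add: mult_le_0_iff)
  next
    case False
    then have c0: "c = 0" using c by simp
    show ?thesis
    proof (cases "a > 0")
      case True
      then show ?thesis using 2 e2 by (simp add: mult_le_0_iff)
    next
      case False
      then have "a = 0" using a by simp
      then have "b = 0" using 3 4 c0 by (simp add: block_form_def)
      then show ?thesis using c0 by simp
    qed
  qed
qed

lemma block_form_eq_0_definite:
  assumes "a*c > b^2" "a \<ge> 0" "c \<ge> 0" "block_form a b c w = 0"
  shows "w = 0"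
proof -
  have c: "c > 0" using assms(1-3)
    by (metis zero_le_power2 mult_zero_right not_le order.not_eq_order_implies_strict)
  have a: "a > 0" using assms(1-3)
    by (metis zero_le_power2 mult_zero_left not_le order.not_eq_order_implies_strict)
  define q where "q = c*(w$2)^2 - 2*b*(w$2)*(w$3) + a*(w$3)^2"
  have cq: "c * q = (c*(w$2) - b*(w$3))^2 + (a*c - b^2)*(w$3)^2"
    by (simp add: q_def power2_eq_square algebra_simps)
  have "c * q \<ge> 0" unfolding cq using assms(1) by (simp add: add_nonneg_nonneg)
  then have q0: "q \<ge> 0" using c by (simp add: zero_le_mult_iff)
  have "(a+c)*(w$1)^2 + q = 0" using assms(4) by (simp add: block_form_def q_def algebra_simps)
  moreover have "(a+c)*(w$1)^2 \<ge> 0" using a c by simp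
  ultimately have w1: "(a+c)*(w$1)^2 = 0" and qz: "q = 0" using q0 by linarith+
  from w1 a c have 1: "w$1 = 0" by simp
  have "(c*(w$2) - b*(w$3))^2 + (a*c - b^2)*(w$3)^2 = 0" using qz cq by simp
  moreover have "(a*c - b^2)*(w$3)^2 \<ge> 0" using assms(1) by simp
  ultimately have "(a*c - b^2)*(w$3)^2 = 0" "(c*(w$2) - b*(w$3))^2 = 0"
    by (smt (verit) zero_le_power2)+
  then have 3: "w$3 = 0" and "c*(w$2) - b*(w$3) = 0" using assms(1) by simp_all
  then have 2: "w$2 = 0" using c by simp
  show ?thesis using 1 2 3 by (simp add: vec_eq_iff forall_3)
qed

lemma block_form_zero_set_degenerate:
  assumes "a*c = b^2" "a \<ge> 0" "c \<ge> 0" "a + c > 0"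
  shows "\<exists>u. u \<noteq> 0 \<and> {w. block_form a b c w = 0} = range (\<lambda>t. t *\<^sub>R u)"
proof (cases "c > 0")
  case True
  define u :: "real^3" where "u = vector [0, b, c]"
  have "{w. block_form a b c w = 0} = range (\<lambda>t. t *\<^sub>R u)"
  proof (intro set_eqI iffI)
    fix w assume "w \<in> {w. block_form a b c w = 0}"
    then have z: "block_form a b c w = 0" by simp
    define q where "q = c*(w$2)^2 - 2*b*(w$2)*(w$3) + a*(w$3)^2"
    have cq: "c * q = (c*(w$2) - b*(w$3))^2"
      using assms(1) by (simp add: q_def power2_eq_square algebra_simps)
    have "c * q \<ge> 0" unfolding cq by simp
    then have q0: "q \<ge> 0" using True by (simp add: zero_le_mult_iff)
    have "(a+c)*(w$1)^2 + q = 0" using z by (simp add: block_form_def q_def algebra_simps)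
    moreover have "(a+c)*(w$1)^2 \<ge> 0" using assms by simp
    ultimately have "(a+c)*(w$1)^2 = 0" and "q = 0" using q0 by linarith+
    then have "w$1 = 0" and "c*(w$2) - b*(w$3) = 0" using assms(4) cq by simp_all
    then have "w$1 = 0" and "w$2 = (w$3/c) * b" using True by (simp_all add: field_simps)
    then have "w = (w$3/c) *\<^sub>R u" using True by (simp add: u_def vec_eq_iff forall_3)
    then show "w \<in> range (\<lambda>t. t *\<^sub>R u)" by blast
  next
    fix w assume "w \<in> range (\<lambda>t. t *\<^sub>R u)"
    then obtain t where "w = t *\<^sub>R u" by blast
    then show "w \<in> {w. block_form a b c w = 0}"
      using assms(1) by (simp add: block_form_def u_def power2_eq_square algebra_simps)
  qed
  moreover have "u \<noteq> 0" using True by (simp add: u_def vec_eq_iff forall_3)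
  ultimately show ?thesis by blast
next
  case False
  then have c0: "c = 0" using assms(3) by simp
  then have b0: "b = 0" and a0: "a > 0" using assms(1,4) by simp_all
  define u :: "real^3" where "u = vector [0, 1, 0]"
  have "{w. block_form a b c w = 0} = range (\<lambda>t. t *\<^sub>R u)"
  proof (intro set_eqI iffI)
    fix w assume "w \<in> {w. block_form a b c w = 0}"
    then have "a * ((w$1)^2 + (w$3)^2) = 0" using b0 c0 by (simp add: block_form_def algebra_simps)
    then have "w$1 = 0" "w$3 = 0" using a0 by (simp_all add: sum_power2_eq_zero_iff)
    then have "w = (w$2) *\<^sub>R u" by (simp add: u_def vec_eq_iff forall_3)
    then show "w \<in> range (\<lambda>t. t *\<^sub>R u)" by blast
  next
    fix w assume "w \<in> range (\<lambda>t. t *\<^sub>R u)"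
    then obtain t where "w = t *\<^sub>R u" by blast
    then show "w \<in> {w. block_form a b c w = 0}"
      using b0 c0 by (simp add: block_form_def u_def)
  qed
  moreover have "u \<noteq> 0" by (simp add: u_def vec_eq_iff forall_3)
  ultimately show ?thesis by blast
qed

lemma rank_le_one_bordered_iff:
  assumes G: "bordered G" and a: "G$2$2 \<ge> 0"
  shows "rank_le_one G \<longleftrightarrow> G$2$2 * G$3$3 = (G$2$3)^2"
proof -
  define a b c where "a = G$2$2" and "b = G$2$3" and "c = G$3$3"
  have Gw: "G *v w = vector [0, a*(w$2) + b*(w$3), b*(w$2) + c*(w$3)]" for w
    using bordered_nth[OF G] unfolding a_def b_def c_def
    by (simp add: matrix_vector_mult_def sum_3 vec_eq_iff forall_3 algebra_simps)
  show ?thesis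
  proof
    assume "rank_le_one G"
    then obtain y where y: "\<forall>w. \<exists>t. G *v w = t *\<^sub>R y" unfolding rank_le_one_def by blast
    obtain t1 t2 where "G *v (vector [0,1,0]) = t1 *\<^sub>R y" "G *v (vector [0,0,1]) = t2 *\<^sub>R y"
      using y by blast
    then have "a = t1 * y$2" "b = t1 * y$3" "b = t2 * y$2" "c = t2 * y$3"
      unfolding Gw by (simp_all add: vec_eq_iff forall_3)
    then show "G$2$2 * G$3$3 = (G$2$3)^2"
      unfolding a_def b_def c_def by (simp add: power2_eq_square algebra_simps)
  next
    assume "G$2$2 * G$3$3 = (G$2$3)^2"
    then have ac: "a * c = b^2" unfolding a_def b_def c_def .
    show "rank_le_one G"
    proof (cases "a > 0")
      case True
      have "G *v w = ((a*(w$2) + b*(w$3))/a) *\<^sub>R vector [0, a, b]" for w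
      proof -
        have "b * (w$2) + c * (w$3) = ((a*(w$2) + b*(w$3))/a) * b"
          using True ac by (simp add: field_simps power2_eq_square)
        then show ?thesis unfolding Gw using True by (simp add: vec_eq_iff forall_3)
      qed
      then show ?thesis unfolding rank_le_one_def by blast
    next
      case False
      then have "a = 0" "b = 0" using a ac by (simp_all add: a_def)
      then have "G *v w = (w$3) *\<^sub>R vector [0, 0, c]" for w
        unfolding Gw by (simp add: vec_eq_iff forall_3)
      then show ?thesis unfolding rank_le_one_def by blast
    qed
  qed
qed

lemma bordered_second_variation_zero_set:
  assumes G: "bordered G" and nonpos: "\<And>w. second_variation G w \<le> 0"
  shows "\<not> rank_le_one G \<Longrightarrow> {w. second_variation G w = 0} = {0}"
    and "G \<noteq> 0 \<Longrightarrow> rank_le_one G \<Longrightarrow>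
      \<exists>u. u \<noteq> 0 \<and> {w. second_variation G w = 0} = range (\<lambda>t. t *\<^sub>R u)"
proof -
  define a b c where "a = G$2$2" and "b = G$2$3" and "c = G$3$3"
  have form: "second_variation G w = block_form a b c w" for w
    unfolding a_def b_def c_def by (rule second_variation_bordered[OF G])
  note coeffs = block_form_nonpos_coeffs[OF nonpos[unfolded form]]
  have rank: "rank_le_one G \<longleftrightarrow> a * c = b^2"
    unfolding a_def b_def c_def by (rule rank_le_one_bordered_iff[OF G coeffs(1)[unfolded a_def]])
  show "{w. second_variation G w = 0} = {0}" if "\<not> rank_le_one G"
  proof -
    have "a * c > b^2" using that rank coeffs(3) by simp
    then show ?thesis
      using block_form_eq_0_definite[OF _ coeffs(1,2)] by (auto simp: form block_form_def)
  qed
  show "\<exists>u. u \<noteq> 0 \<and> {w. second_variation G w = 0} = range (\<lambda>t. t *\<^sub>R u)"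
    if "G \<noteq> 0" "rank_le_one G"
  proof -
    have ac: "a * c = b^2" using that rank by simp
    have "a + c > 0"
    proof (rule ccontr)
      assume "\<not> a + c > 0"
      then have "a = 0" "c = 0" using coeffs(1,2) by simp_all
      moreover from this have "b = 0" using ac by simp
      ultimately have "G = 0"
        using bordered_nth[OF G] unfolding a_def b_def c_def by (simp add: vec_eq_iff forall_3)
      with \<open>G \<noteq> 0\<close> show False by simp
    qed
    then show ?thesis
      unfolding form using block_form_zero_set_degenerate[OF ac coeffs(1,2)] by simp
  qed
qed

lemma exists_orthogonal_bordering:
  assumes sym: "transpose G = G" and v: "G *v v = 0" "v \<noteq> 0"
  obtains P where "orthogonal_matrix P" "bordered (transpose P ** G ** P)"
proof -
  obtain P where P: "rotation_matrix P" "P *v axis 1 1 = (1 / norm v) *\<^sub>R v"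
    using rotation_matrix_exists_basis[of "(1 / norm v) *\<^sub>R v" 1] v(2) by auto
  have "(transpose P ** G ** P) *v axis 1 1 = 0"
    using P(2) v(1) by (simp add: matrix_vector_mul_assoc[symmetric] matrix_vector_mult_scaleR)
  moreover have "transpose (transpose P ** G ** P) = transpose P ** G ** P"
    by (simp add: matrix_transpose_mul sym matrix_mul_assoc)
  moreover have "orthogonal_matrix P" using P(1) by (simp add: rotation_matrix_def)
  ultimately show thesis using that by (simp add: bordered_def)
qed

lemma orthogonal_matrix_invertible: "orthogonal_matrix P \<Longrightarrow> invertible P"
  unfolding orthogonal_matrix_def invertible_def by blast

lemma second_variation_zero_set:
  assumes sym: "transpose G = G" and nonpos: "\<And>w. second_variation G w \<le> 0"
    and v: "G *v v = 0" "v \<noteq> 0"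
  shows "\<not> rank_le_one G \<Longrightarrow> {w. second_variation G w = 0} = {0}"
    and "G \<noteq> 0 \<Longrightarrow> rank_le_one G \<Longrightarrow>
      \<exists>u. u \<noteq> 0 \<and> {w. second_variation G w = 0} = range (\<lambda>t. t *\<^sub>R u)"
proof -
  obtain P where P: "orthogonal_matrix P" and bord: "bordered (transpose P ** G ** P)"
    using exists_orthogonal_bordering[OF sym v] .
  define G' where "G' = transpose P ** G ** P"
  have PPt: "P ** transpose P = mat 1" using P by (simp add: orthogonal_matrix_def)
  have inv: "invertible P" "invertible (transpose P)"
    using P by (simp_all add: orthogonal_matrix_invertible)
  have sv: "second_variation G' w = second_variation G (P *v w)" for w
    unfolding G'_def by (rule second_variation_orthogonal_conj[OF P])
  have zero_set: "{w. second_variation G w = 0} = (\<lambda>w. P *v w) ` {w. second_variation G' w = 0}"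
  proof (intro set_eqI iffI)
    fix w assume "w \<in> {w. second_variation G w = 0}"
    moreover have "P *v (transpose P *v w) = w" by (simp add: matrix_vector_mul_assoc PPt del: transpose_matrix_vector)
    ultimately show "w \<in> (\<lambda>w. P *v w) ` {w. second_variation G' w = 0}"
      using sv[of "transpose P *v w"] by (metis (mono_tags, lifting) image_eqI mem_Collect_eq)
  qed (auto simp: sv)
  have nonpos': "second_variation G' w \<le> 0" for w using sv nonpos by simp
  have rank: "rank_le_one G' \<longleftrightarrow> rank_le_one G"
    unfolding G'_def using rank_le_one_mult_invertible[OF inv(2,1)] .
  show "{w. second_variation G w = 0} = {0}" if "\<not> rank_le_one G"
    using bordered_second_variation_zero_set(1)[OF bord[folded G'_def] nonpos'] that rank
    unfolding zero_set by simp
  show "\<exists>u. u \<noteq> 0 \<and> {w. second_variation G w = 0} = range (\<lambda>t. t *\<^sub>R u)"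
    if nz: "G \<noteq> 0" and r1: "rank_le_one G"
  proof -
    have "G' \<noteq> 0" unfolding G'_def using nz mult_invertible_eq_0[OF inv(2,1)] by simp
    then obtain u where u: "u \<noteq> 0" "{w. second_variation G' w = 0} = range (\<lambda>t. t *\<^sub>R u)"
      using bordered_second_variation_zero_set(2)[OF bord[folded G'_def] nonpos'] r1 rank
      by blast
    have "P *v u \<noteq> 0"
      using u(1) inv(1) by (metis invertible_def matrix_vector_mul_assoc matrix_vector_mul_lid
          matrix_vector_mult_0_right)
    moreover have "{w. second_variation G w = 0} = range (\<lambda>t. t *\<^sub>R (P *v u))"
      unfolding zero_set u(2) image_image by (simp add: matrix_vector_mult_scaleR)
    ultimately show ?thesis by blast
  qed
qed

section \<open>Tangent and normal spaces at a maximizer\<close>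

definition tangent_skews :: "mat3 \<Rightarrow> mat3 \<Rightarrow> mat3 \<Rightarrow> mat3 set" where
  "tangent_skews X U R = {W. skew W \<and> (R ** W ** W ** U) \<bullet> X = 0}"

lemma Tsp_inner_eq: "Tsp (\<lambda>A. A \<bullet> X) U R = (\<lambda>W. R ** W) ` tangent_skews X U R"
  unfolding Tsp_def tangent_skews_def by auto

lemma tangent_skews_eq_hat_image:
  "tangent_skews X U R = hat ` {w. second_variation (transpose R ** X ** transpose U) w = 0}"
proof -
  have "tangent_skews X U R = {W \<in> range hat. (R ** W ** W ** U) \<bullet> X = 0}"
    by (simp add: tangent_skews_def range_hat)
  moreover have "(R ** hat w ** hat w ** U) \<bullet> X = second_variation (transpose R ** X ** transpose U) w" for w
    using inner_matrix_conj[of R "hat w ** hat w" U X] by (simp add: matrix_mul_assoc inner_hat_sq)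
  ultimately show ?thesis by auto
qed

lemma tangent_skews_classification:
  assumes U: "invertible U" and R: "R \<in> Rset (\<lambda>A. A \<bullet> X) U" and X3: "X *v axis 3 1 = 0"
  shows "\<not> rank_le_one X \<Longrightarrow> tangent_skews X U R = {0}"
    and "X \<noteq> 0 \<Longrightarrow> rank_le_one X \<Longrightarrow> \<exists>K. K \<noteq> 0 \<and> tangent_skews X U R = range (\<lambda>t. t *\<^sub>R K)"
proof -
  define G where "G = transpose R ** X ** transpose U"
  have sym: "transpose G = G"
    unfolding G_def by (rule symmetric_if_orthogonal_hats, rule SO3_maximizer_variations(1)[OF R])
  have nonpos: "second_variation G w \<le> 0" for w
    unfolding G_def by (rule SO3_maximizer_variations(2)[OF R])
  have invU: "invertible (transpose U)" using U by (rule transpose_invertible)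
  then obtain U' where U': "transpose U ** U' = mat 1" unfolding invertible_def by blast
  define v where "v = U' *v axis 3 1"
  have Uv: "transpose U *v v = axis 3 1"
    unfolding v_def by (simp add: matrix_vector_mul_assoc U' del: transpose_matrix_vector)
  then have v0: "v \<noteq> 0" by (metis axis_nth matrix_vector_mult_0_right zero_index zero_neq_one)
  have Gv: "G *v v = 0"
    unfolding G_def using Uv X3
    by (simp add: matrix_vector_mul_assoc[symmetric] del: transpose_matrix_vector)
  note zero_set = second_variation_zero_set[OF sym nonpos Gv v0]
  have invR: "invertible (transpose R)"
    using R SO3_orthogonal by (auto simp: Rset_def invertible_def)
  have rank: "rank_le_one G \<longleftrightarrow> rank_le_one X"
    unfolding G_def by (rule rank_le_one_mult_invertible[OF invR invU])
  show "tangent_skews X U R = {0}" if "\<not> rank_le_one X"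
    using zero_set(1) that rank unfolding tangent_skews_eq_hat_image G_def[symmetric] by simp
  show "\<exists>K. K \<noteq> 0 \<and> tangent_skews X U R = range (\<lambda>t. t *\<^sub>R K)"
    if nz: "X \<noteq> 0" and r1: "rank_le_one X"
  proof -
    have "G \<noteq> 0" unfolding G_def using nz mult_invertible_eq_0[OF invR invU] by simp
    then obtain u where u: "u \<noteq> 0" "{w. second_variation G w = 0} = range (\<lambda>t. t *\<^sub>R u)"
      using zero_set(2) r1 rank by blast
    have "hat u \<noteq> 0" using u(1) inj_hat hat_0 by (metis injD)
    moreover have "tangent_skews X U R = range (\<lambda>t. t *\<^sub>R hat u)"
      unfolding tangent_skews_eq_hat_image G_def[symmetric] u(2) image_image hat_scaleR ..
    ultimately show ?thesis by blast
  qed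
qed

definition tangent_dim :: "mat3 \<Rightarrow> nat" where
  "tangent_dim X = (if X = 0 then 3 else if rank_le_one X then 1 else 0)"

lemma tangent_dim_scaleR: "c \<noteq> 0 \<Longrightarrow> tangent_dim (c *\<^sub>R X) = tangent_dim X"
  by (simp add: tangent_dim_def rank_le_one_scaleR)

lemma dim_Tsp_inner:
  assumes U: "invertible U" and R: "R \<in> Rset (\<lambda>A. A \<bullet> X) U" and X3: "X *v axis 3 1 = 0"
  shows "dim (Tsp (\<lambda>A. A \<bullet> X) U R) = tangent_dim X"
proof -
  have "dim (Tsp (\<lambda>A. A \<bullet> X) U R) = dim (tangent_skews X U R)"
    using R unfolding Tsp_inner_eq by (simp add: Rset_def dim_SO3_image)
  moreover have "dim (tangent_skews X U R) = tangent_dim X"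
  proof (cases "X = 0")
    case True
    then have "tangent_skews X U R = {W. skew W}" by (simp add: tangent_skews_def)
    then show ?thesis using True dim_skew by (simp add: tangent_dim_def)
  next
    case False
    show ?thesis
    proof (cases "rank_le_one X")
      case True
      then obtain K where "K \<noteq> 0" "tangent_skews X U R = span {K}"
        using tangent_skews_classification(2)[OF U R X3 False] by (auto simp: span_singleton)
      then show ?thesis using False True by (simp add: tangent_dim_def)
    next
      case False
      then show ?thesis
        using tangent_skews_classification(1)[OF U R X3] \<open>X \<noteq> 0\<close> by (simp add: tangent_dim_def)
    qed
  qed
  ultimately show ?thesis by simp
qed

lemma Nsp_inner_iff:
  assumes R: "R \<in> SO3"
  shows "R ** W \<in> Nsp (\<lambda>A. A \<bullet> X) U R \<longleftrightarrow> skew W \<and> (\<forall>W'\<in>tangent_skews X U R. W \<bullet> W' = 0)"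
proof -
  have "R ** W \<in> Nsp (\<lambda>A. A \<bullet> X) U R \<longleftrightarrow> skew W \<and> (\<forall>V\<in>Tsp (\<lambda>A. A \<bullet> X) U R. (R ** W) \<bullet> V = 0)"
    unfolding Nsp_def using inj_SO3_mult[OF R] by (auto dest: injD)
  then show ?thesis
    unfolding Tsp_inner_eq by (simp add: inner_SO3_mult[OF R])
qed

lemma Rset_scale: "c > 0 \<Longrightarrow> Rset (\<lambda>A. c * F A) U = Rset F U"
  by (simp add: Rset_def)

lemma Nsp_scale: "c \<noteq> 0 \<Longrightarrow> Nsp (\<lambda>A. c * F A) U R = Nsp F U R"
  by (simp add: Nsp_def Tsp_def)

section \<open>Limits of maximizers and of normal directions\<close>

lemma tendsto_matrix_mult:
  fixes A :: "'x \<Rightarrow> real^'n^'m" and B :: "'x \<Rightarrow> real^'k^'n"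
  assumes "(A \<longlongrightarrow> a) F" "(B \<longlongrightarrow> b) F"
  shows "((\<lambda>x. A x ** B x) \<longlongrightarrow> a ** b) F"
  unfolding matrix_matrix_mult_def
  by (rule vec_tendstoI, simp only: vec_lambda_beta, rule vec_tendstoI, simp only: vec_lambda_beta)
    (intro tendsto_sum tendsto_mult tendsto_vec_nth assms)

lemma tendsto_transpose:
  fixes A :: "'x \<Rightarrow> real^'n^'m"
  assumes "(A \<longlongrightarrow> a) F"
  shows "((\<lambda>x. transpose (A x)) \<longlongrightarrow> transpose a) F"
  unfolding transpose_def
  by (rule vec_tendstoI, simp only: vec_lambda_beta, rule vec_tendstoI, simp only: vec_lambda_beta)
    (intro tendsto_vec_nth assms)

lemma tendsto_det3:
  fixes A :: "'x \<Rightarrow> mat3"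
  assumes "(A \<longlongrightarrow> a) F"
  shows "((\<lambda>x. det (A x)) \<longlongrightarrow> det a) F"
  unfolding det_3 by (intro tendsto_intros tendsto_vec_nth assms)

lemma closed_SO3: "closed SO3"
proof (unfold closed_sequential_limits, intro allI impI, elim conjE)
  fix f :: "nat \<Rightarrow> mat3" and l assume f: "\<forall>n. f n \<in> SO3" "f \<longlonglongrightarrow> l"
  have "(\<lambda>n. transpose (f n) ** f n) \<longlonglongrightarrow> transpose l ** l"
    by (intro tendsto_matrix_mult tendsto_transpose f(2))
  moreover have "(\<lambda>n. det (f n)) \<longlonglongrightarrow> det l" by (intro tendsto_det3 f(2))
  moreover have "transpose (f n) ** f n = mat 1" "det (f n) = 1" for n
    using f(1) by (simp_all add: SO3_def rotation_matrix_def orthogonal_matrix)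
  ultimately have "mat 1 = transpose l ** l" "1 = det l"
    by (simp_all add: LIMSEQ_const_iff)
  then show "l \<in> SO3" by (simp add: SO3_def rotation_matrix_def orthogonal_matrix)
qed

lemma bounded_SO3: "bounded SO3"
proof -
  have "norm R \<le> 3" if "R \<in> SO3" for R
  proof -
    have "norm (R$i) = 1" for i
      using that orthogonal_matrix_orthonormal_rows[of R]
      by (simp add: SO3_def rotation_matrix_def row_def)
    have "norm R = L2_set (\<lambda>i. norm (R$i)) UNIV" by (rule norm_vec_def)
    also have "\<dots> \<le> (\<Sum>i\<in>UNIV. norm (R$i))" by (rule L2_set_le_sum) simp
    also have "\<dots> = 3" using \<open>\<And>i. norm (R$i) = 1\<close> by simp
    finally show ?thesis .
  qed
  then show ?thesis unfolding bounded_iff by blast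
qed

lemma compact_SO3: "compact SO3"
  using closed_SO3 bounded_SO3 compact_eq_bounded_closed by blast

lemma Rset_nonempty: "\<exists>R. R \<in> Rset (\<lambda>A. A \<bullet> X) U"
proof -
  have "continuous_on SO3 (\<lambda>R. (R ** U) \<bullet> X)"
    by (intro continuous_on_inner continuous_on_const)
      (auto simp: continuous_on_def intro: tendsto_matrix_mult tendsto_ident_at)
  then obtain R where "R \<in> SO3" "\<forall>R'\<in>SO3. (R' ** U) \<bullet> X \<le> (R ** U) \<bullet> X"
    using continuous_attains_sup[OF compact_SO3] mat_1_in_SO3 by blast
  then show ?thesis unfolding Rset_def by blast
qed

lemma Lam_nonempty:
  fixes U :: "nat \<Rightarrow> mat3"
  assumes "l \<ge> 1"
  shows "\<exists>i. i \<in> Lam (\<lambda>A. A \<bullet> X) l U"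
proof -
  define F where "F = (\<lambda>A::mat3. A \<bullet> X)"
  define Ri where "Ri i = (SOME R. R \<in> Rset F (U i))" for i
  have Ri: "Ri i \<in> Rset F (U i)" for i unfolding Ri_def F_def using Rset_nonempty by (rule someI_ex)
  define m where "m i = F (Ri i ** U i)" for i
  have fin: "finite (m ` {1..l})" "m ` {1..l} \<noteq> {}" using assms by auto
  obtain i where i: "i \<in> {1..l}" "m i = Max (m ` {1..l})" using Max_in[OF fin] by auto
  have "i \<in> Lam F l U"
    unfolding Lam_def
  proof (intro CollectI conjI subsetI)
    fix A assume "A \<in> (\<lambda>R. R ** U i) ` Rset F (U i)"
    then obtain R where R: "R \<in> Rset F (U i)" "A = R ** U i" by blast
    then have "R \<in> SO3" "F A = m i" using Ri[of i] unfolding m_def Rset_def by (auto intro: antisym)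
    moreover have "F B \<le> m i" if B: "B \<in> wellset l U" for B
    proof -
      obtain k R' where k: "k \<in> {1..l}" "R' \<in> SO3" "B = R' ** U k"
        using B unfolding wellset_def by blast
      then have "F B \<le> m k" using Ri[of k] unfolding m_def Rset_def by auto
      also have "m k \<le> m i" unfolding i(2) using fin k(1) by (intro Max_ge) auto
      finally show ?thesis .
    qed
    ultimately show "A \<in> argmax_on F (wellset l U)"
      unfolding argmax_on_def wellset_def using i(1) R(2) by auto
  qed (use i in simp)
  then show ?thesis unfolding F_def by blast
qed

lemma LIMSEQ_eventually_eq:
  fixes f :: "nat \<Rightarrow> 'a::t2_space"
  assumes "f \<longlonglongrightarrow> L" "eventually (\<lambda>n. f n = c) sequentially"
  shows "L = c"
  using LIMSEQ_unique[OF assms(1) tendsto_eventually[OF assms(2)]] .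

lemma skew_limit:
  assumes "f \<longlonglongrightarrow> L" "eventually (\<lambda>n. skew (f n)) sequentially"
  shows "skew L"
proof -
  have "(\<lambda>n. transpose (f n) + f n) \<longlonglongrightarrow> transpose L + L"
    by (intro tendsto_add tendsto_transpose assms(1))
  moreover have "eventually (\<lambda>n. transpose (f n) + f n = 0) sequentially"
    using assms(2) by eventually_elim (simp add: skew_def)
  ultimately have "transpose L + L = 0" by (rule LIMSEQ_eventually_eq)
  then show ?thesis unfolding skew_def by (simp add: eq_neg_iff_add_eq_0)
qed

lemma Rset_limit:
  assumes Rn: "\<And>n. Rn n \<in> Rset (\<lambda>A. A \<bullet> N n) U" and RnR: "Rn \<longlonglongrightarrow> R" and NM: "N \<longlonglongrightarrow> M"
  shows "R \<in> Rset (\<lambda>A. A \<bullet> M) U"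
proof -
  have "R \<in> SO3" using closed_sequentially[OF closed_SO3 _ RnR] Rn by (simp add: Rset_def)
  moreover have "(R' ** U) \<bullet> M \<le> (R ** U) \<bullet> M" if "R' \<in> SO3" for R'
  proof (rule tendsto_le[OF trivial_limit_sequentially])
    show "(\<lambda>n. (Rn n ** U) \<bullet> N n) \<longlonglongrightarrow> (R ** U) \<bullet> M"
      by (intro tendsto_inner tendsto_matrix_mult tendsto_const NM RnR)
    show "(\<lambda>n. (R' ** U) \<bullet> N n) \<longlonglongrightarrow> (R' ** U) \<bullet> M"
      by (intro tendsto_inner tendsto_const NM)
    show "eventually (\<lambda>n. (R' ** U) \<bullet> N n \<le> (Rn n ** U) \<bullet> N n) sequentially"
      using Rn that by (simp add: Rset_def)
  qed
  ultimately show ?thesis by (simp add: Rset_def)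
qed

lemma tangent_skews_limit:
  assumes A: "eventually (\<lambda>n. A n \<in> tangent_skews (N n) U (Rn n)) sequentially"
    and AA: "A \<longlonglongrightarrow> A0" and RnR: "Rn \<longlonglongrightarrow> R" and NM: "N \<longlonglongrightarrow> M"
  shows "A0 \<in> tangent_skews M U R"
proof -
  have "skew A0"
    by (rule skew_limit[OF AA]) (use A in \<open>eventually_elim, simp add: tangent_skews_def\<close>)
  have "(\<lambda>n. (Rn n ** A n ** A n ** U) \<bullet> N n) \<longlonglongrightarrow> (R ** A0 ** A0 ** U) \<bullet> M"
    by (intro tendsto_inner tendsto_matrix_mult tendsto_const NM RnR AA)
  moreover have "eventually (\<lambda>n. (Rn n ** A n ** A n ** U) \<bullet> N n = 0) sequentially"
    using A by eventually_elim (simp add: tangent_skews_def)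
  ultimately have "(R ** A0 ** A0 ** U) \<bullet> M = 0" by (rule LIMSEQ_eventually_eq)
  with \<open>skew A0\<close> show ?thesis by (simp add: tangent_skews_def)
qed

lemma unit_tangent_skew_exists:
  assumes U: "invertible U" and R: "R \<in> Rset (\<lambda>A. A \<bullet> X) U" and X3: "X *v axis 3 1 = 0"
    and "X \<noteq> 0" "rank_le_one X"
  shows "\<exists>A\<in>tangent_skews X U R. norm A = 1"
proof -
  obtain K where "K \<noteq> 0" "tangent_skews X U R = range (\<lambda>t. t *\<^sub>R K)"
    using tangent_skews_classification(2)[OF U R X3 assms(4,5)] by blast
  then show ?thesis by (intro bexI[of _ "(1 / norm K) *\<^sub>R K"]) auto
qed

lemma unit_tangent_skew_limit:
  assumes NM: "N \<longlonglongrightarrow> M" and RnR: "Rn \<longlonglongrightarrow> R" and WnW: "Wn \<longlonglongrightarrow> W"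
    and orth: "\<And>n. \<forall>W'\<in>tangent_skews (N n) U (Rn n). Wn n \<bullet> W' = 0"
    and ex: "eventually (\<lambda>n. \<exists>A\<in>tangent_skews (N n) U (Rn n). norm A = 1) sequentially"
  obtains A0 where "A0 \<in> tangent_skews M U R" "norm A0 = 1" "W \<bullet> A0 = 0"
proof -
  obtain E :: mat3 where "norm E = 1" using vector_choose_size[of 1] by auto
  then have "\<exists>A. norm A = 1 \<and>
      ((\<exists>A\<in>tangent_skews (N n) U (Rn n). norm A = 1) \<longrightarrow> A \<in> tangent_skews (N n) U (Rn n))" for n
    by blast
  then obtain A where A: "\<And>n. norm (A n) = 1"
    "\<And>n. \<exists>A\<in>tangent_skews (N n) U (Rn n). norm A = 1 \<Longrightarrow> A n \<in> tangent_skews (N n) U (Rn n)"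
    by metis
  have "\<forall>n. A n \<in> sphere 0 1" using A(1) by simp
  then obtain A0 r where A0: "A0 \<in> sphere 0 1" and r: "strict_mono r" "(A \<circ> r) \<longlonglongrightarrow> A0"
    by (rule seq_compactE[OF compact_imp_seq_compact[OF compact_sphere]])
  have "eventually (\<lambda>n. A n \<in> tangent_skews (N n) U (Rn n)) sequentially"
    using eventually_mono[OF ex A(2)] .
  from eventually_subseq[OF r(1) this]
  have ev: "eventually (\<lambda>n. A (r n) \<in> tangent_skews (N (r n)) U (Rn (r n))) sequentially" .
  have lims: "(\<lambda>n. N (r n)) \<longlonglongrightarrow> M" "(\<lambda>n. Rn (r n)) \<longlonglongrightarrow> R" "(\<lambda>n. Wn (r n)) \<longlonglongrightarrow> W"
    "(\<lambda>n. A (r n)) \<longlonglongrightarrow> A0"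
    using LIMSEQ_subseq_LIMSEQ[OF _ r(1)] NM RnR WnW r(2) by (simp_all add: o_def)
  have "A0 \<in> tangent_skews M U R" by (rule tangent_skews_limit[OF ev lims(4,2,1)])
  moreover have "W \<bullet> A0 = 0"
  proof (rule LIMSEQ_eventually_eq)
    show "(\<lambda>n. Wn (r n) \<bullet> A (r n)) \<longlonglongrightarrow> W \<bullet> A0" by (intro tendsto_inner lims)
    show "eventually (\<lambda>n. Wn (r n) \<bullet> A (r n) = 0) sequentially"
      using ev orth by (auto elim: eventually_mono)
  qed
  ultimately show thesis using that A0 by simp
qed

lemma orthogonal_tangent_skews_limit:
  assumes U: "invertible U" and NM: "N \<longlonglongrightarrow> M" and M3: "M *v axis 3 1 = 0"
    and N3: "\<And>n. N n *v axis 3 1 = 0"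
    and Rn: "\<And>n. Rn n \<in> Rset (\<lambda>A. A \<bullet> N n) U" and RnR: "Rn \<longlonglongrightarrow> R"
    and Wn: "\<And>n. skew (Wn n)" "\<And>n. norm (Wn n) = 1" and WnW: "Wn \<longlonglongrightarrow> W"
    and orth: "\<And>n. \<forall>W'\<in>tangent_skews (N n) U (Rn n). Wn n \<bullet> W' = 0"
    and dim: "eventually (\<lambda>n. tangent_dim (N n) = tangent_dim M) sequentially"
  shows "\<forall>W'\<in>tangent_skews M U R. W \<bullet> W' = 0"
proof -
  have R: "R \<in> Rset (\<lambda>A. A \<bullet> M) U" by (rule Rset_limit[OF Rn RnR NM])
  consider "M = 0" | "\<not> rank_le_one M" | "M \<noteq> 0" "rank_le_one M" by blast
  then show ?thesis
  proof cases
    case 1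
    have "eventually (\<lambda>n. N n = 0) sequentially"
      using dim by eventually_elim (use 1 in \<open>simp add: tangent_dim_def split: if_splits\<close>)
    then obtain n where "N n = 0" by (meson eventually_sequentially order.refl)
    then have "Wn n \<bullet> Wn n = 0" using orth[of n] Wn(1) by (simp add: tangent_skews_def)
    with Wn(2)[of n] show ?thesis by simp
  next
    case 2
    then show ?thesis using tangent_skews_classification(1)[OF U R M3] by simp
  next
    case 3
    obtain K where K: "K \<noteq> 0" "tangent_skews M U R = range (\<lambda>t. t *\<^sub>R K)"
      using tangent_skews_classification(2)[OF U R M3 3] by blast
    have "eventually (\<lambda>n. \<exists>A\<in>tangent_skews (N n) U (Rn n). norm A = 1) sequentially"
      using dim
    proof eventually_elim
      case (elim n)
      then have "N n \<noteq> 0" "rank_le_one (N n)"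
        using 3 by (simp_all add: tangent_dim_def split: if_splits)
      then show ?case by (rule unit_tangent_skew_exists[OF U Rn N3])
    qed
    then obtain A0 where A0: "A0 \<in> tangent_skews M U R" "norm A0 = 1" "W \<bullet> A0 = 0"
      by (rule unit_tangent_skew_limit[OF NM RnR WnW orth])
    obtain t0 where "A0 = t0 *\<^sub>R K" using A0(1) K(2) by auto
    with A0(2) have t0: "A0 = t0 *\<^sub>R K" "t0 \<noteq> 0" by auto
    show ?thesis
    proof
      fix W' assume "W' \<in> tangent_skews M U R"
      then obtain t where "W' = (t / t0) *\<^sub>R A0" using K(2) t0 by auto
      then show "W \<bullet> W' = 0" using A0(3) by simp
    qed
  qed
qed

lemma Nsp_limit:
  assumes U: "invertible U" and NM: "N \<longlonglongrightarrow> M" and M3: "M *v axis 3 1 = 0"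
    and N3: "\<And>n. N n *v axis 3 1 = 0"
    and Rn: "\<And>n. Rn n \<in> Rset (\<lambda>A. A \<bullet> N n) U"
    and Wn: "\<And>n. skew (Wn n)" "\<And>n. norm (Wn n) = 1"
    and Nn: "\<And>n. Rn n ** Wn n \<in> Nsp (\<lambda>A. A \<bullet> N n) U (Rn n)"
    and dim: "eventually (\<lambda>n. tangent_dim (N n) = tangent_dim M) sequentially"
  obtains \<sigma> R W where "strict_mono \<sigma>" "R \<in> Rset (\<lambda>A. A \<bullet> M) U" "skew W" "norm W = 1"
    "R ** W \<in> Nsp (\<lambda>A. A \<bullet> M) U R" "(\<lambda>n. Rn (\<sigma> n) ** Wn (\<sigma> n)) \<longlonglongrightarrow> R ** W"
proof -
  have RnS: "Rn n \<in> SO3" for n using Rn by (simp add: Rset_def)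
  have orth: "\<forall>W'\<in>tangent_skews (N n) U (Rn n). Wn n \<bullet> W' = 0" for n
    using Nn[of n] by (simp add: Nsp_inner_iff[OF RnS])
  have "\<forall>n. (Rn n, Wn n) \<in> SO3 \<times> sphere 0 1" using RnS Wn(2) by simp
  then obtain RW \<sigma> where RW: "RW \<in> SO3 \<times> sphere 0 1" and \<sigma>: "strict_mono \<sigma>"
    and lim: "((\<lambda>n. (Rn n, Wn n)) \<circ> \<sigma>) \<longlonglongrightarrow> RW"
    by (rule seq_compactE[OF compact_imp_seq_compact[OF compact_Times[OF compact_SO3 compact_sphere]]])
  obtain R W where RW_eq: "RW = (R, W)" by (cases RW)
  with RW have RW: "R \<in> SO3" "norm W = 1" by auto
  have lims: "(\<lambda>n. Rn (\<sigma> n)) \<longlonglongrightarrow> R" "(\<lambda>n. Wn (\<sigma> n)) \<longlonglongrightarrow> W" "(\<lambda>n. N (\<sigma> n)) \<longlonglongrightarrow> M"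
    using tendsto_fst[OF lim] tendsto_snd[OF lim] LIMSEQ_subseq_LIMSEQ[OF NM \<sigma>] RW_eq
    by (simp_all add: o_def)
  have "skew W" using skew_limit[OF lims(2)] Wn(1) by simp
  moreover have "\<forall>W'\<in>tangent_skews M U R. W \<bullet> W' = 0"
    using orthogonal_tangent_skews_limit[OF U lims(3) M3 N3 Rn lims(1) Wn lims(2) orth
        eventually_subseq[OF \<sigma> dim]] .
  ultimately have "R ** W \<in> Nsp (\<lambda>A. A \<bullet> M) U R" by (simp add: Nsp_inner_iff[OF RW(1)])
  moreover have "R \<in> Rset (\<lambda>A. A \<bullet> M) U" by (rule Rset_limit[OF Rn lims(1,3)])
  moreover have "(\<lambda>n. Rn (\<sigma> n) ** Wn (\<sigma> n)) \<longlonglongrightarrow> R ** W"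
    by (intro tendsto_matrix_mult lims)
  ultimately show thesis using \<sigma> \<open>skew W\<close> RW(2) by (intro that)
qed

lemma Nsp_limit_rescaled:
  assumes U: "invertible U" and lim: "(\<lambda>n. c n *\<^sub>R X n) \<longlonglongrightarrow> M" and c: "\<And>n. c n > 0"
    and M3: "M *v axis 3 1 = 0" and X3: "\<And>n. X n *v axis 3 1 = 0"
    and Rn: "\<And>n. Rn n \<in> Rset (\<lambda>A. A \<bullet> X n) U"
    and Wn: "\<And>n. skew (Wn n)" "\<And>n. norm (Wn n) = 1"
    and Nn: "\<And>n. Rn n ** Wn n \<in> Nsp (\<lambda>A. A \<bullet> X n) U (Rn n)"
    and dim: "eventually (\<lambda>n. tangent_dim (X n) = tangent_dim M) sequentially"
  obtains \<sigma> R W where "strict_mono \<sigma>" "R \<in> Rset (\<lambda>A. A \<bullet> M) U" "skew W" "norm W = 1"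
    "R ** W \<in> Nsp (\<lambda>A. A \<bullet> M) U R" "(\<lambda>n. Rn (\<sigma> n) ** Wn (\<sigma> n)) \<longlonglongrightarrow> R ** W"
proof (rule Nsp_limit[OF U lim M3])
  have scaled: "(\<lambda>A. A \<bullet> (c n *\<^sub>R X n)) = (\<lambda>A. c n * (A \<bullet> X n))" for n
    by simp
  show "c n *\<^sub>R X n *v axis 3 1 = 0" for n
    by (simp add: scaleR_matrix_vector_assoc[symmetric] X3)
  show "Rn n \<in> Rset (\<lambda>A. A \<bullet> (c n *\<^sub>R X n)) U" for n
    using Rn[of n] c[of n] by (simp only: scaled Rset_scale)
  show "Rn n ** Wn n \<in> Nsp (\<lambda>A. A \<bullet> (c n *\<^sub>R X n)) U (Rn n)" for n
    using Nn[of n] c[of n] by (simp only: scaled Nsp_scale less_irrefl not_False_eq_True)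
  show "eventually (\<lambda>n. tangent_dim (c n *\<^sub>R X n) = tangent_dim M) sequentially"
    using dim c by (simp add: tangent_dim_scaleR less_imp_neq[symmetric])
qed (use that Wn in blast)+

section \<open>Moment matrices of loads\<close>

lemma le_plus_powr:
  fixes t p \<delta> :: real
  assumes "p \<ge> 1" "t \<ge> 0" "\<delta> > 0"
  shows "t \<le> \<delta> + \<delta> powr (1 - p) * t powr p"
proof (cases "t \<le> \<delta>")
  case True
  then show ?thesis by (smt (verit) powr_ge_zero mult_nonneg_nonneg)
next
  case False
  then have "t powr (1 - p) * t powr p \<le> \<delta> powr (1 - p) * t powr p"
    using assms by (intro mult_right_mono powr_mono2') auto
  moreover have "t powr (1 - p) * t powr p = t" using False assms by (simp add: powr_add[symmetric])
  ultimately show ?thesis using assms by simp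
qed

lemma norm_diff_powr_le:
  fixes a b :: "'a::real_normed_vector"
  assumes "p \<ge> 1"
  shows "norm (a - b) powr p \<le> 2 powr p * (norm a powr p + norm b powr p)"
proof -
  define m where "m = max (norm a) (norm b)"
  have "norm (a - b) \<le> 2 * m" unfolding m_def using norm_triangle_ineq4[of a b] by linarith
  then have "norm (a - b) powr p \<le> (2 * m) powr p" using assms by (intro powr_mono2) auto
  also have "\<dots> = 2 powr p * m powr p" unfolding m_def by (simp add: powr_mult)
  also have "m powr p \<le> norm a powr p + norm b powr p"
    unfolding m_def by (cases "norm a \<le> norm b") (simp_all add: max_def add_increasing add_increasing2)
  then have "2 powr p * m powr p \<le> 2 powr p * (norm a powr p + norm b powr p)" by simp
  finally show ?thesis .
qed

lemma integrable_if_integrable_powr: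
  fixes g :: "'a \<Rightarrow> 'b::{banach, second_countable_topology}"
  assumes M: "finite_measure M" and g: "g \<in> borel_measurable M"
    and gp: "integrable M (\<lambda>x. norm (g x) powr p)" and p: "p \<ge> 1"
  shows "integrable M g"
proof (rule Bochner_Integration.integrable_bound)
  show "integrable M (\<lambda>x. 1 + norm (g x) powr p)"
    using finite_measure.integrable_const[OF M] gp by (rule Bochner_Integration.integrable_add)
  show "AE x in M. norm (g x) \<le> norm (1 + norm (g x) powr p)"
    using le_plus_powr[OF p norm_ge_zero, of 1] by (intro AE_I2) (simp add: add_nonneg_nonneg)
qed (rule g)

lemma integrable_powr_scaleR_diff:
  fixes g f :: "'a \<Rightarrow> 'b::euclidean_space"
  assumes g: "g \<in> borel_measurable M" and f: "f \<in> borel_measurable M"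
    and gp: "integrable M (\<lambda>x. norm (g x) powr p)"
    and fp: "integrable M (\<lambda>x. norm (f x) powr p)" and p: "p \<ge> 1"
  shows "integrable M (\<lambda>x. norm (c *\<^sub>R g x - f x) powr p)"
proof (rule Bochner_Integration.integrable_bound)
  show "integrable M (\<lambda>x. 2 powr p * (\<bar>c\<bar> powr p * norm (g x) powr p + norm (f x) powr p))"
    using gp fp by (intro integrable_mult_right Bochner_Integration.integrable_add)
  show "(\<lambda>x. norm (c *\<^sub>R g x - f x) powr p) \<in> borel_measurable M"
    using g f by measurable
  show "AE x in M. norm (norm (c *\<^sub>R g x - f x) powr p) \<le>
      norm (2 powr p * (\<bar>c\<bar> powr p * norm (g x) powr p + norm (f x) powr p))"
    using norm_diff_powr_le[OF p, of "c *\<^sub>R g _" "f _"] by (simp add: powr_mult)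
qed

lemma integral_norm_tendsto_0_if_powr:
  fixes u :: "nat \<Rightarrow> 'a \<Rightarrow> 'b::{banach, second_countable_topology}"
  assumes M: "finite_measure M" and p: "p \<ge> 1"
    and u: "\<And>n. u n \<in> borel_measurable M"
    and up: "\<And>n. integrable M (\<lambda>x. norm (u n x) powr p)"
    and lim: "(\<lambda>n. integral\<^sup>L M (\<lambda>x. norm (u n x) powr p)) \<longlonglongrightarrow> 0"
  shows "(\<lambda>n. integral\<^sup>L M (\<lambda>x. norm (u n x))) \<longlonglongrightarrow> 0"
proof (unfold tendsto_iff, intro allI impI)
  fix \<epsilon> :: real assume e: "\<epsilon> > 0"
  define \<mu> where "\<mu> = measure M (space M)"
  have mu0: "\<mu> \<ge> 0" unfolding \<mu>_def by simp
  define \<delta> where "\<delta> = \<epsilon> / (2 * (\<mu> + 1))"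
  have d: "\<delta> > 0" using e mu0 unfolding \<delta>_def by simp
  define C where "C = \<delta> powr (1 - p)"
  have C: "C > 0" using d unfolding C_def by simp
  have "\<delta> * \<mu> = (\<epsilon> / 2) * (\<mu> / (\<mu> + 1))" unfolding \<delta>_def by (simp add: field_simps)
  also have "\<dots> \<le> (\<epsilon> / 2) * 1" using e mu0 by (intro mult_left_mono) simp_all
  finally have dmu: "\<delta> * \<mu> \<le> \<epsilon> / 2" by simp
  have "eventually (\<lambda>n. integral\<^sup>L M (\<lambda>x. norm (u n x) powr p) < \<epsilon> / (2 * C)) sequentially"
    using order_tendstoD(2)[OF lim] e C by simp
  then show "eventually (\<lambda>n. dist (integral\<^sup>L M (\<lambda>x. norm (u n x))) 0 < \<epsilon>) sequentially"
  proof eventually_elim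
    case (elim n)
    have const: "integrable M (\<lambda>x. \<delta>)" by (rule finite_measure.integrable_const[OF M])
    have "integral\<^sup>L M (\<lambda>x. norm (u n x)) \<le> integral\<^sup>L M (\<lambda>x. \<delta> + C * norm (u n x) powr p)"
    proof (rule integral_mono)
      show "integrable M (\<lambda>x. norm (u n x))"
        using integrable_if_integrable_powr[OF M u up p] by simp
      show "integrable M (\<lambda>x. \<delta> + C * norm (u n x) powr p)"
        using const up by (intro Bochner_Integration.integrable_add integrable_mult_right)
    qed (use le_plus_powr[OF p norm_ge_zero d] C_def in simp)
    also have "\<dots> = \<delta> * \<mu> + C * integral\<^sup>L M (\<lambda>x. norm (u n x) powr p)"
      using const up by (simp add: \<mu>_def mult.commute)
    also have "\<dots> < \<epsilon> / 2 + C * (\<epsilon> / (2 * C))"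
      using dmu elim C by (intro add_le_less_mono mult_strict_left_mono) simp_all
    also have "\<dots> = \<epsilon>" using C by simp
    finally show ?case by simp
  qed
qed

definition plane_lift :: "real^2 \<Rightarrow> real^3" where
  "plane_lift x = vector [x$1, x$2, 0]"

definition moment_matrix :: "(real^2) set \<Rightarrow> (real^2 \<Rightarrow> real^3) \<Rightarrow> mat3" where
  "moment_matrix S g = (\<chi> i k. integral\<^sup>L (lebesgue_on S) (\<lambda>x. g x $ i * plane_lift x $ k))"

lemma abs_plane_lift_nth_le: "\<bar>plane_lift x $ k\<bar> \<le> norm x"
  using exhaust_3[of k] component_le_norm_cart[of x 1] component_le_norm_cart[of x 2]
  by (auto simp: plane_lift_def)

lemma moment_integrand_bound:
  assumes "\<forall>x\<in>S. norm x \<le> B" "x \<in> S"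
  shows "\<bar>g x $ i * plane_lift x $ k\<bar> \<le> B * norm (g x)"
proof -
  have "\<bar>g x $ i\<bar> * \<bar>plane_lift x $ k\<bar> \<le> norm (g x) * B"
    using assms abs_plane_lift_nth_le[of x k] component_le_norm_cart[of "g x" i]
    by (intro mult_mono) auto
  then show ?thesis by (simp add: abs_mult mult.commute)
qed

lemma integrable_moment_integrand:
  fixes g :: "real^2 \<Rightarrow> real^3"
  assumes S: "S \<in> lmeasurable" and B: "\<forall>x\<in>S. norm x \<le> B" and g: "integrable (lebesgue_on S) g"
  shows "integrable (lebesgue_on S) (\<lambda>x. g x $ i * plane_lift x $ k)"
proof (rule Bochner_Integration.integrable_bound)
  show "integrable (lebesgue_on S) (\<lambda>x. B * norm (g x))" using g by simp
  have "(\<lambda>x. plane_lift x $ k) = (\<lambda>x. if k = 1 then x$1 else if k = 2 then x$2 else 0)"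
    using exhaust_3[of k] by (auto simp: plane_lift_def)
  moreover have "continuous_on S (\<lambda>x::real^2. if k = 1 then x$1 else if k = 2 then x$2 else 0)"
    by (cases "k = 1"; cases "k = 2") (simp_all add: continuous_on_component continuous_on_id)
  ultimately have "(\<lambda>x. plane_lift x $ k) \<in> borel_measurable (lebesgue_on S)"
    using continuous_imp_measurable_on_sets_lebesgue S by auto
  moreover have "(\<lambda>x. g x $ i) \<in> borel_measurable (lebesgue_on S)"
    using measurable_compose[OF borel_measurable_integrable[OF g] borel_measurable_nth] by simp
  ultimately show "(\<lambda>x. g x $ i * plane_lift x $ k) \<in> borel_measurable (lebesgue_on S)"
    by (intro borel_measurable_times)
  show "AE x in lebesgue_on S. norm (g x $ i * plane_lift x $ k) \<le> norm (B * norm (g x))"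
  proof (rule AE_I2)
    fix x assume "x \<in> space (lebesgue_on S)"
    then have "x \<in> S" by simp
    then have "B \<ge> 0" using B norm_ge_zero[of x] by (meson order_trans)
    then show "norm (g x $ i * plane_lift x $ k) \<le> norm (B * norm (g x))"
      using moment_integrand_bound[OF B \<open>x \<in> S\<close>] by simp
  qed
qed

lemma load_eq_inner_moment_matrix:
  assumes S: "S \<in> lmeasurable" and B: "\<forall>x\<in>S. norm x \<le> B" and g: "integrable (lebesgue_on S) g"
  shows "load S g = (\<lambda>A. A \<bullet> moment_matrix S g)"
proof
  fix A :: mat3
  have "g x \<bullet> (A *v vector [x$1, x$2, 0]) = (\<Sum>i\<in>UNIV. \<Sum>k\<in>UNIV. A$i$k * (g x $ i * plane_lift x $ k))" for x
    unfolding plane_lift_def[symmetric]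
    by (simp add: inner_vec_def matrix_vector_mult_def sum_distrib_left mult_ac)
  then have "load S g A = integral\<^sup>L (lebesgue_on S) (\<lambda>x. \<Sum>i\<in>UNIV. \<Sum>k\<in>UNIV. A$i$k * (g x $ i * plane_lift x $ k))"
    unfolding load_def by simp
  also have "\<dots> = (\<Sum>i\<in>UNIV. \<Sum>k\<in>UNIV. A$i$k * integral\<^sup>L (lebesgue_on S) (\<lambda>x. g x $ i * plane_lift x $ k))"
    using integrable_moment_integrand[OF S B g] by (simp add: integral_sum)
  also have "\<dots> = A \<bullet> moment_matrix S g" by (simp add: inner_vec_def moment_matrix_def)
  finally show "load S g A = A \<bullet> moment_matrix S g" .
qed

lemma moment_matrix_third_column: "moment_matrix S g *v axis 3 1 = 0"
  by (simp add: moment_matrix_def matrix_vector_mult_def axis_def sum_3 vec_eq_iff plane_lift_def)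

lemma moment_matrix_scaleR_diff:
  assumes S: "S \<in> lmeasurable" and B: "\<forall>x\<in>S. norm x \<le> B"
    and g: "integrable (lebesgue_on S) g" and f: "integrable (lebesgue_on S) f"
  shows "moment_matrix S (\<lambda>x. c *\<^sub>R g x - f x) = c *\<^sub>R moment_matrix S g - moment_matrix S f"
proof -
  have "(c *\<^sub>R g x - f x) $ i * plane_lift x $ k = c * (g x $ i * plane_lift x $ k) - f x $ i * plane_lift x $ k"
    for x i k by (simp add: algebra_simps)
  then show ?thesis
    unfolding moment_matrix_def vec_eq_iff
    using integrable_moment_integrand[OF S B g] integrable_moment_integrand[OF S B f] by simp
qed

lemma abs_moment_matrix_nth_le:
  assumes S: "S \<in> lmeasurable" and B: "\<forall>x\<in>S. norm x \<le> B" and u: "integrable (lebesgue_on S) u"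
  shows "\<bar>moment_matrix S u $ i $ k\<bar> \<le> B * integral\<^sup>L (lebesgue_on S) (\<lambda>x. norm (u x))"
proof -
  have "\<bar>moment_matrix S u $ i $ k\<bar> \<le> integral\<^sup>L (lebesgue_on S) (\<lambda>x. B * norm (u x))"
    unfolding moment_matrix_def vec_lambda_beta
    using u moment_integrand_bound[OF B]
    by (intro integral_abs_bound_integral integrable_moment_integrand[OF S B u]) auto
  then show ?thesis by simp
qed

lemma moment_matrix_tendsto:
  assumes S: "S \<in> lmeasurable" and B: "\<forall>x\<in>S. norm x \<le> B" and p: "p \<ge> 1"
    and g: "\<And>n. g n \<in> borel_measurable (lebesgue_on S)"
      "\<And>n. integrable (lebesgue_on S) (\<lambda>x. norm (g n x) powr p)"
    and f: "f \<in> borel_measurable (lebesgue_on S)" "integrable (lebesgue_on S) (\<lambda>x. norm (f x) powr p)"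
    and lim: "(\<lambda>n. integral\<^sup>L (lebesgue_on S) (\<lambda>x. norm (c n *\<^sub>R g n x - f x) powr p)) \<longlonglongrightarrow> 0"
  shows "(\<lambda>n. c n *\<^sub>R moment_matrix S (g n)) \<longlonglongrightarrow> moment_matrix S f"
proof -
  have M: "finite_measure (lebesgue_on S)" using S by (rule finite_measure_lebesgue_on)
  have int_g: "integrable (lebesgue_on S) (g n)" for n
    using integrable_if_integrable_powr[OF M g p] .
  have int_f: "integrable (lebesgue_on S) f" using integrable_if_integrable_powr[OF M f p] .
  define u where "u n x = c n *\<^sub>R g n x - f x" for n x
  have int_u: "integrable (lebesgue_on S) (u n)" for n
    unfolding u_def using int_g int_f by simp
  have "(\<lambda>n. integral\<^sup>L (lebesgue_on S) (\<lambda>x. norm (u n x))) \<longlonglongrightarrow> 0"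
    using integral_norm_tendsto_0_if_powr[OF M p _ integrable_powr_scaleR_diff[OF g(1) f(1) g(2) f(2) p] lim] g(1) f(1)
    unfolding u_def by measurable
  then have L1: "(\<lambda>n. B * integral\<^sup>L (lebesgue_on S) (\<lambda>x. norm (u n x))) \<longlonglongrightarrow> 0"
    using tendsto_mult_right_zero by blast
  have "(\<lambda>n. (c n *\<^sub>R moment_matrix S (g n) - moment_matrix S f) $ i $ k) \<longlonglongrightarrow> 0" for i k
  proof (rule Lim_null_comparison[OF always_eventually L1])
    show "\<forall>n. norm ((c n *\<^sub>R moment_matrix S (g n) - moment_matrix S f) $ i $ k)
        \<le> B * integral\<^sup>L (lebesgue_on S) (\<lambda>x. norm (u n x))"
      using abs_moment_matrix_nth_le[OF S B int_u] moment_matrix_scaleR_diff[OF S B int_g int_f]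
      unfolding u_def by simp
  qed
  then have "(\<lambda>n. c n *\<^sub>R moment_matrix S (g n) - moment_matrix S f) \<longlonglongrightarrow> 0"
    by (intro vec_tendstoI) (simp add: vec_tendstoI)
  then show ?thesis by (rule LIM_zero_cancel)
qed

section \<open>Rescaled loads and the dimension hypothesis\<close>

lemma sym_pos_def_invertible: "sym_pos_def U \<Longrightarrow> invertible U"
  unfolding invertible_left_inverse matrix_left_invertible_ker sym_pos_def_def
  by (metis inner_zero_right less_irrefl)

lemma tendsto_0_if_powr_tendsto_0:
  fixes x :: "nat \<Rightarrow> real"
  assumes "(\<lambda>n. x n powr e) \<longlonglongrightarrow> 0" "e > 0" "\<And>n. x n \<ge> 0"
  shows "x \<longlonglongrightarrow> 0"
proof -
  have "(\<lambda>n. (x n powr e) powr (1 / e)) \<longlonglongrightarrow> 0"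
    using assms by (intro tendsto_zero_powrI[OF assms(1) tendsto_const]) auto
  moreover have "(x n powr e) powr (1 / e) = x n" for n
    using assms by (simp add: powr_powr)
  ultimately show ?thesis by simp
qed

text \<open>The tangent dimension at a maximizer depends on the moment matrix only, not on
  \<open>U\<^sub>i\<close> or on the maximizer, so a single index of \<open>\<Lambda>\<close> suffices.\<close>
lemma tangent_dim_eventually_eq:
  fixes U :: "nat \<Rightarrow> mat3"
  assumes U: "\<And>i. i \<in> {1..l} \<Longrightarrow> invertible (U i)" and l: "l \<ge> 1"
    and X3: "\<And>n. X n *v axis 3 1 = 0" and M3: "M *v axis 3 1 = 0"
    and dims: "\<And>i. i \<in> Lam (\<lambda>A. A \<bullet> M) l U \<Longrightarrow>
      eventually (\<lambda>n. \<forall>R\<in>Rset (\<lambda>A. A \<bullet> X n) (U i). \<forall>R'\<in>Rset (\<lambda>A. A \<bullet> M) (U i).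
        dim (Tsp (\<lambda>A. A \<bullet> X n) (U i) R) = dim (Tsp (\<lambda>A. A \<bullet> M) (U i) R')) sequentially"
  shows "eventually (\<lambda>n. tangent_dim (X n) = tangent_dim M) sequentially"
proof -
  obtain i where i: "i \<in> Lam (\<lambda>A. A \<bullet> M) l U" using Lam_nonempty[OF l] by blast
  then have Ui: "invertible (U i)" using U by (simp add: Lam_def)
  obtain R' where R': "R' \<in> Rset (\<lambda>A. A \<bullet> M) (U i)" using Rset_nonempty by blast
  show ?thesis
    using dims[OF i]
  proof eventually_elim
    case (elim n)
    obtain R where R: "R \<in> Rset (\<lambda>A. A \<bullet> X n) (U i)" using Rset_nonempty by blast
    then show ?case
      using elim R' dim_Tsp_inner[OF Ui R X3] dim_Tsp_inner[OF Ui R' M3] by simp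
  qed
qed

theorem lemma5p3:
  fixes l :: nat and U :: "nat \<Rightarrow> mat3" and S :: "(real^2) set"
    and \<alpha> q :: real and h :: "nat \<Rightarrow> real"
    and fh :: "nat \<Rightarrow> real^2 \<Rightarrow> real^3" and f :: "real^2 \<Rightarrow> real^3"
    and j :: nat and Rh Wh :: "nat \<Rightarrow> mat3"
  assumes U: "\<And>i. i \<in> {1..l} \<Longrightarrow> sym_pos_def (U i)"
    and S: "bounded S" "connected S" "lipschitz_domain S"
    and alpha: "\<alpha> \<ge> 2"
    and q: "1 < q" "q \<le> 2"
    and h: "\<And>n. h n > 0" "h \<longlonglongrightarrow> 0"
    and fh_meas: "\<And>n. fh n \<in> borel_measurable (lebesgue_on S)"
    and fh_Lq: "\<And>n. integrable (lebesgue_on S) (\<lambda>x. norm (fh n x) powr (q / (q - 1)))"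
    and fh_mean: "\<And>n. integral\<^sup>L (lebesgue_on S) (fh n) = 0"
    and f_meas: "f \<in> borel_measurable (lebesgue_on S)"
    and f_Lq: "integrable (lebesgue_on S) (\<lambda>x. norm (f x) powr (q / (q - 1)))"
    and conv: "(\<lambda>n. (integral\<^sup>L (lebesgue_on S)
                  (\<lambda>x. norm (h n powr (- \<alpha> / 2 - 1) *\<^sub>R fh n x - f x) powr (q / (q - 1))))
                  powr ((q - 1) / q)) \<longlonglongrightarrow> 0"
    and F1: "eventually (\<lambda>n. Lam (load S (fh n)) l U = Lam (load S f) l U) sequentially"
    and F2: "\<And>i. i \<in> Lam (load S f) l U \<Longrightarrow>
               eventually (\<lambda>n. \<forall>R\<in>Rset (load S (fh n)) (U i). \<forall>R'\<in>Rset (load S f) (U i).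
                  dim (Tsp (load S (fh n)) (U i) R) = dim (Tsp (load S f) (U i) R')) sequentially"
    and j: "j \<in> {1..l}"
    and Rh: "\<And>n. Rh n \<in> Rset (load S (fh n)) (U j)"
    and Wh: "\<And>n. skew (Wh n)" "\<And>n. norm (Wh n) = 1"
    and N: "\<And>n. Rh n ** Wh n \<in> Nsp (load S (fh n)) (U j) (Rh n)"
  shows "\<exists>\<sigma> R W. strict_mono \<sigma> \<and> R \<in> Rset (load S f) (U j) \<and> skew W \<and> norm W = 1 \<and>
           R ** W \<in> Nsp (load S f) (U j) R \<and>
           ((\<lambda>n. Rh (\<sigma> n) ** Wh (\<sigma> n)) \<longlonglongrightarrow> R ** W)"
proof -
  \<comment> \<open>Only the integrability hypotheses, \<open>conv\<close> and (F2) are used.\<close>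
  define p where "p = q / (q - 1)"
  have p: "p \<ge> 1" using q by (simp add: p_def field_simps)
  note fh_Lp = fh_Lq[folded p_def] and f_Lp = f_Lq[folded p_def]
  have Sm: "S \<in> lmeasurable" using S lmeasurable_open lipschitz_domain_def by blast
  obtain B where B: "\<forall>x\<in>S. norm x \<le> B" using S(1) bounded_iff by blast
  have fin: "finite_measure (lebesgue_on S)" using Sm by (rule finite_measure_lebesgue_on)
  have load_fh: "load S (fh n) = (\<lambda>A. A \<bullet> moment_matrix S (fh n))" for n
    using integrable_if_integrable_powr[OF fin fh_meas fh_Lp p] by (rule load_eq_inner_moment_matrix[OF Sm B])
  have load_f: "load S f = (\<lambda>A. A \<bullet> moment_matrix S f)"
    using integrable_if_integrable_powr[OF fin f_meas f_Lp p] by (rule load_eq_inner_moment_matrix[OF Sm B])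
  define c where "c n = h n powr (- \<alpha> / 2 - 1)" for n
  have c: "c n > 0" for n using h(1)[of n] by (simp add: c_def)
  have "(\<lambda>n. integral\<^sup>L (lebesgue_on S) (\<lambda>x. norm (c n *\<^sub>R fh n x - f x) powr p)) \<longlonglongrightarrow> 0"
  proof (rule tendsto_0_if_powr_tendsto_0)
    show "(\<lambda>n. integral\<^sup>L (lebesgue_on S) (\<lambda>x. norm (c n *\<^sub>R fh n x - f x) powr p)
        powr ((q - 1) / q)) \<longlonglongrightarrow> 0"
      using conv unfolding c_def p_def .
  qed (use q in simp_all)
  then have lim: "(\<lambda>n. c n *\<^sub>R moment_matrix S (fh n)) \<longlonglongrightarrow> moment_matrix S f"
    by (rule moment_matrix_tendsto[OF Sm B p fh_meas fh_Lp f_meas f_Lp])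
  have dim: "eventually (\<lambda>n. tangent_dim (moment_matrix S (fh n)) = tangent_dim (moment_matrix S f))
      sequentially"
    by (rule tangent_dim_eventually_eq[OF sym_pos_def_invertible[OF U] _ moment_matrix_third_column
          moment_matrix_third_column F2[unfolded load_fh load_f]]) (use j in auto)
  obtain \<sigma> R W where "strict_mono \<sigma>" "R \<in> Rset (load S f) (U j)" "skew W" "norm W = 1"
    "R ** W \<in> Nsp (load S f) (U j) R" "(\<lambda>n. Rh (\<sigma> n) ** Wh (\<sigma> n)) \<longlonglongrightarrow> R ** W"
    unfolding load_f
    by (rule Nsp_limit_rescaled[OF sym_pos_def_invertible[OF U[OF j]] lim c moment_matrix_third_column
          moment_matrix_third_column Rh[unfolded load_fh] Wh(1,2) N[unfolded load_fh] dim])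
  then show ?thesis by blast
qed

end
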